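(* Let $G$ be a simple graph with edge set $E(G)=\{e_1,\ldots,e_r\}$ and let $s\geq 1$ be an integer. Then for any product $u=e_{i_1}\cdots e_{i_s}$ of $s$ (not necessarily distinct) edges, we have $$\big(I(G)^{(s+1)}:u\big)=\Big(\big(I(G)^{(2)}:e_{i_1}\big)^{(s)}: e_{i_2}\cdots e_{i_s}\Big).$$
   Context: $S=\mathbb{K}[x_1,\dots,x_n]$ over a field $\mathbb{K}$; vertices of $G$ are the variables and edges are identified with quadratic squarefree monomials. $I(G)$ is the edge ideal generated by the edges. For a squarefree monomial ideal $J$ with irredundant decomposition $J=\mathfrak{p}_1\cap\dots\cap\mathfrak{p}_r$ into monomial primes, $J^{(s)}=\mathfrak{p}_1^s\cap\dots\cap\mathfrak{p}_r^s$; in particular $I(G)^{(s)}=\bigcap_{C\in\mathcal{C}(G)}\mathfrak{p}_C^s$, where $\mathcal{C}(G)$ is the set of minimal vertex covers of $G$ and $\mathfrak{p}_C$ is generated by the variables in $C$. (Note $(I(G)^{(2)}:e)$ is a squarefree monomial ideal, so its symbolic power is defined in this way.) *)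

theory Defs
  imports Main
begin

text \<open>Monomial ideals in S = K[x_v | v in V] are represented by the set of monomials
they contain; a monomial is an exponent vector 'a => nat supported on V, and the
product of monomials is the pointwise sum of exponent vectors.\<close>

definition mons :: "'a set \<Rightarrow> ('a \<Rightarrow> nat) set" where
  "mons V = {m. \<forall>x. x \<notin> V \<longrightarrow> m x = 0}"

definition edge_mon :: "'a set \<Rightarrow> ('a \<Rightarrow> nat)" where
  "edge_mon e = (\<lambda>x. if x \<in> e then 1 else 0)"

definition edges_prod :: "'a set list \<Rightarrow> ('a \<Rightarrow> nat)" where
  "edges_prod es = (\<lambda>x. \<Sum>e\<leftarrow>es. edge_mon e x)"

definition simple_graph :: "'a set \<Rightarrow> 'a set set \<Rightarrow> bool" where
  "simple_graph V E \<longleftrightarrow> finite V \<and> (\<forall>e\<in>E. \<exists>a b. a \<in> V \<and> b \<in> V \<and> a \<noteq> b \<and> e = {a, b})"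

definition edge_ideal :: "'a set \<Rightarrow> 'a set set \<Rightarrow> ('a \<Rightarrow> nat) set" where
  "edge_ideal V E = {m \<in> mons V. \<exists>e\<in>E. \<forall>x\<in>e. 1 \<le> m x}"

definition colon :: "'a set \<Rightarrow> ('a \<Rightarrow> nat) set \<Rightarrow> ('a \<Rightarrow> nat) \<Rightarrow> ('a \<Rightarrow> nat) set" where
  "colon V J u = {m \<in> mons V. (\<lambda>x. m x + u x) \<in> J}"

text \<open>The s-th power of the monomial prime p_C generated by the variables in C.\<close>
definition prime_pow :: "'a set \<Rightarrow> 'a set \<Rightarrow> nat \<Rightarrow> ('a \<Rightarrow> nat) set" where
  "prime_pow V C s = {m \<in> mons V. s \<le> (\<Sum>x\<in>C. m x)}"

definition vertex_cover :: "'a set \<Rightarrow> 'a set set \<Rightarrow> 'a set \<Rightarrow> bool" where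
  "vertex_cover V E C \<longleftrightarrow> C \<subseteq> V \<and> (\<forall>e\<in>E. e \<inter> C \<noteq> {})"

definition min_vertex_cover :: "'a set \<Rightarrow> 'a set set \<Rightarrow> 'a set \<Rightarrow> bool" where
  "min_vertex_cover V E C \<longleftrightarrow> vertex_cover V E C \<and> (\<forall>D. D \<subset> C \<longrightarrow> \<not> vertex_cover V E D)"

definition edge_symb_pow :: "'a set \<Rightarrow> 'a set set \<Rightarrow> nat \<Rightarrow> ('a \<Rightarrow> nat) set" where
  "edge_symb_pow V E s = {m \<in> mons V. \<forall>C. min_vertex_cover V E C \<longrightarrow> m \<in> prime_pow V C s}"

text \<open>For a squarefree monomial ideal these are
exactly the primes of its irredundant primary (prime) decomposition.\<close>
definition contained_in_prime :: "'a set \<Rightarrow> ('a \<Rightarrow> nat) set \<Rightarrow> 'a set \<Rightarrow> bool" where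
  "contained_in_prime V J C \<longleftrightarrow> C \<subseteq> V \<and> (\<forall>m\<in>J. \<exists>x\<in>C. 0 < m x)"

definition min_prime :: "'a set \<Rightarrow> ('a \<Rightarrow> nat) set \<Rightarrow> 'a set \<Rightarrow> bool" where
  "min_prime V J C \<longleftrightarrow> contained_in_prime V J C \<and> (\<forall>D. D \<subset> C \<longrightarrow> \<not> contained_in_prime V J D)"

definition sqfree_symb_pow :: "'a set \<Rightarrow> ('a \<Rightarrow> nat) set \<Rightarrow> nat \<Rightarrow> ('a \<Rightarrow> nat) set" where
  "sqfree_symb_pow V J s = {m \<in> mons V. \<forall>C. min_prime V J C \<longrightarrow> m \<in> prime_pow V C s}"

end

theory Submission
  imports Defs
begin

text \<open>Write u = e u'. Every minimal vertex cover C meets e in one or two vertices and meets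
each of the s - 1 edges of u', so the C-degree of u is at least 2 + (s - 1) = s + 1 whenever
e \<subseteq> C. Hence the condition m u \<in> p_C^{s+1} is automatic for those covers and amounts to
m u' \<in> p_C^s for the others. The covers not containing e form an antichain, and the
ideal (I(G)^{(2)} : e) is the intersection of their primes; so they are exactly its minimal
primes, and its s-th symbolic power is the intersection of their s-th powers.\<close>

definition prime_pow_Inter :: "'a set \<Rightarrow> 'a set set \<Rightarrow> nat \<Rightarrow> ('a \<Rightarrow> nat) set" where
  "prime_pow_Inter V F s = {m \<in> mons V. \<forall>C\<in>F. m \<in> prime_pow V C s}"

lemma add_mem_mons: "m \<in> mons V \<Longrightarrow> u \<in> mons V \<Longrightarrow> (\<lambda>x. m x + u x) \<in> mons V"
  by (simp add: mons_def)

lemma colon_zero: "J \<subseteq> mons V \<Longrightarrow> colon V J (\<lambda>_. 0) = J"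
  by (auto simp: colon_def)

lemma mem_prime_pow_1_iff:
  assumes "finite C"
  shows "m \<in> prime_pow V C 1 \<longleftrightarrow> m \<in> mons V \<and> (\<exists>x\<in>C. 0 < m x)"
proof -
  have "1 \<le> sum m C \<longleftrightarrow> sum m C \<noteq> 0" by linarith
  then show ?thesis
    using assms by (auto simp: prime_pow_def)
qed

lemma contained_in_prime_prime_pow_Inter_iff:
  assumes "\<forall>C\<in>F. finite C \<and> C \<subseteq> V"
  shows "contained_in_prime V (prime_pow_Inter V F 1) D \<longleftrightarrow> D \<subseteq> V \<and> (\<exists>C\<in>F. C \<subseteq> D)"
proof
  assume D: "contained_in_prime V (prime_pow_Inter V F 1) D"
  show "D \<subseteq> V \<and> (\<exists>C\<in>F. C \<subseteq> D)"
  proof (rule ccontr)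
    assume "\<not> ?thesis"
    with D have not_sub: "\<forall>C\<in>F. \<not> C \<subseteq> D"
      by (auto simp: contained_in_prime_def)
    define m where "m = (\<lambda>x. if x \<in> V - D then 1 else (0::nat))"
    \<comment> \<open>the indicator of V - D lies in every p_C with C \<in> F, but in no p_x with x \<in> D\<close>
    have "m \<in> prime_pow_Inter V F 1"
    proof -
      have "\<exists>x\<in>C. 0 < m x" if C: "C \<in> F" for C
      proof -
        obtain x where "x \<in> C" "x \<notin> D"
          using C not_sub by blast
        moreover have "x \<in> V"
          using C assms calculation by blast
        ultimately show ?thesis by (auto simp: m_def)
      qed
      moreover have "m \<in> mons V" by (simp add: m_def mons_def)
      ultimately show ?thesis
        unfolding prime_pow_Inter_def using assms mem_prime_pow_1_iff by blast
    qed
    with D obtain x where "x \<in> D" "0 < m x"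
      by (auto simp: contained_in_prime_def)
    then show False by (simp add: m_def)
  qed
next
  assume "D \<subseteq> V \<and> (\<exists>C\<in>F. C \<subseteq> D)"
  then obtain C where "D \<subseteq> V" "C \<in> F" "C \<subseteq> D"
    by blast
  show "contained_in_prime V (prime_pow_Inter V F 1) D"
    unfolding contained_in_prime_def
  proof (intro conjI ballI)
    fix m assume "m \<in> prime_pow_Inter V F 1"
    then have "m \<in> prime_pow V C 1"
      unfolding prime_pow_Inter_def using \<open>C \<in> F\<close> by blast
    then obtain x where "x \<in> C" "0 < m x"
      using mem_prime_pow_1_iff assms \<open>C \<in> F\<close> by blast
    then show "\<exists>x\<in>D. 0 < m x"
      using \<open>C \<subseteq> D\<close> by blast
  qed fact
qed

lemma min_prime_prime_pow_Inter_iff: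
  assumes fin: "\<forall>C\<in>F. finite C \<and> C \<subseteq> V"
    and antichain: "\<forall>C\<in>F. \<forall>C'\<in>F. C' \<subseteq> C \<longrightarrow> C' = C"
  shows "min_prime V (prime_pow_Inter V F 1) D \<longleftrightarrow> D \<in> F"
proof
  assume "min_prime V (prime_pow_Inter V F 1) D"
  then have "\<exists>C\<in>F. C \<subseteq> D"
    and minimal: "\<forall>D'. D' \<subset> D \<longrightarrow> \<not> (D' \<subseteq> V \<and> (\<exists>C\<in>F. C \<subseteq> D'))"
    unfolding min_prime_def contained_in_prime_prime_pow_Inter_iff[OF fin] by blast+
  then obtain C where C: "C \<in> F" "C \<subseteq> D"
    by blast
  moreover have "C \<subseteq> V"
    using fin C(1) by blast
  ultimately have "\<not> C \<subset> D"
    using minimal by blast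
  with C show "D \<in> F"
    by (metis psubsetI)
next
  assume D: "D \<in> F"
  then have "D \<subseteq> V"
    using fin by blast
  moreover have "\<not> C \<subseteq> D'" if "D' \<subset> D" "C \<in> F" for D' C
  proof
    assume "C \<subseteq> D'"
    with that antichain D have "C = D"
      by (meson psubset_imp_subset subset_trans)
    with \<open>C \<subseteq> D'\<close> \<open>D' \<subset> D\<close> show False
      by blast
  qed
  ultimately show "min_prime V (prime_pow_Inter V F 1) D"
    unfolding min_prime_def contained_in_prime_prime_pow_Inter_iff[OF fin] using D by blast
qed

lemma sqfree_symb_pow_prime_pow_Inter:
  assumes "\<forall>C\<in>F. finite C \<and> C \<subseteq> V"
    and "\<forall>C\<in>F. \<forall>C'\<in>F. C' \<subseteq> C \<longrightarrow> C' = C"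
  shows "sqfree_symb_pow V (prime_pow_Inter V F 1) s = prime_pow_Inter V F s"
  unfolding sqfree_symb_pow_def min_prime_prime_pow_Inter_iff[OF assms]
  by (auto simp: prime_pow_Inter_def)

lemma edges_prod_Nil [simp]: "edges_prod [] = (\<lambda>_. 0)"
  by (simp add: edges_prod_def)

lemma edges_prod_Cons: "edges_prod (e # L) x = edge_mon e x + edges_prod L x"
  by (simp add: edges_prod_def)

lemma edges_prod_in_mons: "\<forall>e\<in>set L. e \<subseteq> V \<Longrightarrow> edges_prod L \<in> mons V"
  by (induction L) (auto simp: mons_def edges_prod_Cons edge_mon_def)

lemma sum_edge_mon: "finite C \<Longrightarrow> (\<Sum>x\<in>C. edge_mon e x) = card (C \<inter> e)"
  by (simp add: edge_mon_def sum.If_cases Collect_mem_eq)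

lemma card_Int_doubleton:
  assumes "a \<noteq> b" "{a, b} \<inter> C \<noteq> {}"
  shows "card (C \<inter> {a, b}) = (if {a, b} \<subseteq> C then 2 else 1)"
proof (cases "a \<in> C")
  case True
  then show ?thesis
    by (cases "b \<in> C") (use assms in \<open>simp_all add: Int_insert_right\<close>)
next
  case False
  then show ?thesis
    by (cases "b \<in> C") (use assms in \<open>simp_all add: Int_insert_right\<close>)
qed

lemma length_le_sum_edges_prod:
  "finite C \<Longrightarrow> \<forall>e\<in>set L. e \<inter> C \<noteq> {} \<Longrightarrow> length L \<le> (\<Sum>x\<in>C. edges_prod L x)"
proof (induction L)
  case Nil
  then show ?case by simp
next
  case (Cons e L)
  have "C \<inter> e \<noteq> {}"
    using Cons.prems by auto
  then have "1 \<le> card (C \<inter> e)"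
    using Cons.prems(1) by (simp add: Suc_le_eq card_gt_0_iff)
  moreover have "(\<Sum>x\<in>C. edges_prod (e # L) x) = card (C \<inter> e) + (\<Sum>x\<in>C. edges_prod L x)"
    using Cons.prems(1) by (simp add: edges_prod_Cons sum.distrib sum_edge_mon)
  moreover have "length L \<le> (\<Sum>x\<in>C. edges_prod L x)"
    using Cons.IH Cons.prems by simp
  ultimately show ?case
    by simp
qed

lemma cover_degree_edges_prod_Cons_iff:
  assumes C: "vertex_cover V E C" "finite C"
    and e: "e \<in> E" "e = {a, b}" "a \<noteq> b"
    and L: "set L \<subseteq> E" "length L + 1 = s"
  shows "s + 1 \<le> (\<Sum>x\<in>C. m x + edges_prod (e # L) x) \<longleftrightarrow>
         (\<not> e \<subseteq> C \<longrightarrow> s \<le> (\<Sum>x\<in>C. m x + edges_prod L x))"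
proof -
  have cover: "\<forall>e\<in>E. e \<inter> C \<noteq> {}"
    using C(1) by (simp add: vertex_cover_def)
  have "{a, b} \<inter> C \<noteq> {}"
    using cover e(1,2) by blast
  then have card_e: "card (C \<inter> e) = (if e \<subseteq> C then 2 else 1)"
    unfolding e(2) by (rule card_Int_doubleton[OF e(3)])
  have "length L \<le> (\<Sum>x\<in>C. edges_prod L x)"
    using length_le_sum_edges_prod[OF C(2)] cover L(1) by (meson subsetD)
  then have rest: "s \<le> 1 + (\<Sum>x\<in>C. m x + edges_prod L x)"
    using L(2) by (simp add: sum.distrib)
  have "(\<Sum>x\<in>C. m x + edges_prod (e # L) x) = card (C \<inter> e) + (\<Sum>x\<in>C. m x + edges_prod L x)"
    using C(2) by (simp add: edges_prod_Cons sum.distrib sum_edge_mon)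
  then show ?thesis
    using card_e rest by simp
qed

lemma simple_graph_edgeE:
  assumes "simple_graph V E" "e \<in> E"
  obtains a b where "a \<in> V" "b \<in> V" "a \<noteq> b" "e = {a, b}"
  using assms unfolding simple_graph_def by blast

lemma simple_graph_edge_subset: "simple_graph V E \<Longrightarrow> e \<in> E \<Longrightarrow> e \<subseteq> V"
  by (erule simple_graph_edgeE) auto

lemma min_vertex_cover_finite: "simple_graph V E \<Longrightarrow> min_vertex_cover V E C \<Longrightarrow> finite C"
  unfolding simple_graph_def min_vertex_cover_def vertex_cover_def by (meson finite_subset)

lemma colon_edge_symb_pow_edges_prod_Cons:
  assumes G: "simple_graph V E" and e: "e \<in> E" and L: "set L \<subseteq> E" and s: "length L + 1 = s"
  shows "colon V (edge_symb_pow V E (s + 1)) (edges_prod (e # L)) =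
         colon V (prime_pow_Inter V {C. min_vertex_cover V E C \<and> \<not> e \<subseteq> C} s) (edges_prod L)"
proof -
  obtain a b where ab: "e = {a, b}" "a \<noteq> b"
    using simple_graph_edgeE[OF G e] by blast
  have edges_in_V: "\<forall>e'\<in>set (e # L). e' \<subseteq> V"
    using simple_graph_edge_subset[OF G] e L by auto
  have "edges_prod (e # L) \<in> mons V"
    using edges_in_V by (rule edges_prod_in_mons)
  moreover have "edges_prod L \<in> mons V"
    using edges_in_V by (intro edges_prod_in_mons) simp
  ultimately have mons_sums: "m \<in> mons V \<Longrightarrow>
      (\<lambda>x. m x + edges_prod L x) \<in> mons V \<and> (\<lambda>x. m x + edges_prod (e # L) x) \<in> mons V" for m
    by (simp add: add_mem_mons)
  have degree: "s + 1 \<le> (\<Sum>x\<in>C. m x + edges_prod (e # L) x) \<longleftrightarrow>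
      (\<not> e \<subseteq> C \<longrightarrow> s \<le> (\<Sum>x\<in>C. m x + edges_prod L x))"
    if C: "min_vertex_cover V E C" for C m
    using cover_degree_edges_prod_Cons_iff[OF C[unfolded min_vertex_cover_def, THEN conjunct1]
        min_vertex_cover_finite[OF G C] e ab(1,2) L s] .
  have lhs: "m \<in> colon V (edge_symb_pow V E (s + 1)) (edges_prod (e # L)) \<longleftrightarrow>
      m \<in> mons V \<and>
      (\<forall>C. min_vertex_cover V E C \<longrightarrow> s + 1 \<le> (\<Sum>x\<in>C. m x + edges_prod (e # L) x))" for m
    using mons_sums[of m] by (auto simp: colon_def edge_symb_pow_def prime_pow_def)
  have rhs: "m \<in> colon V (prime_pow_Inter V {C. min_vertex_cover V E C \<and> \<not> e \<subseteq> C} s)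
        (edges_prod L) \<longleftrightarrow>
      m \<in> mons V \<and>
      (\<forall>C. min_vertex_cover V E C \<and> \<not> e \<subseteq> C \<longrightarrow> s \<le> (\<Sum>x\<in>C. m x + edges_prod L x))" for m
    using mons_sums[of m] by (auto simp: colon_def prime_pow_Inter_def prime_pow_def)
  show ?thesis
    unfolding set_eq_iff lhs rhs using degree by (metis (no_types, lifting))
qed

lemma colon_edge_symb_pow_2_edge_mon:
  assumes "simple_graph V E" and "e \<in> E"
  shows "colon V (edge_symb_pow V E 2) (edge_mon e) =
         prime_pow_Inter V {C. min_vertex_cover V E C \<and> \<not> e \<subseteq> C} 1"
proof -
  have "edges_prod [e] = edge_mon e"
    by (simp add: edges_prod_def)
  moreover have "prime_pow_Inter V F 1 \<subseteq> mons V" for F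
    by (auto simp: prime_pow_Inter_def)
  ultimately show ?thesis
    using colon_edge_symb_pow_edges_prod_Cons[OF assms, of "[]" 1, unfolded one_add_one]
    by (simp add: colon_zero)
qed

theorem lemma3p3:
  fixes V :: "'a set" and E :: "'a set set" and s :: nat and es :: "'a set list"
  assumes "simple_graph V E"
    and "1 \<le> s"
    and "length es = s"
    and "set es \<subseteq> E"
  shows "colon V (edge_symb_pow V E (s + 1)) (edges_prod es) =
         colon V (sqfree_symb_pow V (colon V (edge_symb_pow V E 2) (edge_mon (hd es))) s)
                 (edges_prod (tl es))"
proof -
  obtain e L where es: "es = e # L" and s: "length L + 1 = s"
    using assms(2,3) by (cases es) auto
  have e: "e \<in> E" and L: "set L \<subseteq> E"
    using assms(4) es by auto
  define F where "F = {C. min_vertex_cover V E C \<and> \<not> e \<subseteq> C}"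
  have F_finite: "\<forall>C\<in>F. finite C \<and> C \<subseteq> V"
    using min_vertex_cover_finite[OF assms(1)]
    by (auto simp: F_def min_vertex_cover_def vertex_cover_def)
  have F_antichain: "\<forall>C\<in>F. \<forall>C'\<in>F. C' \<subseteq> C \<longrightarrow> C' = C"
    by (auto simp: F_def min_vertex_cover_def)
  have "sqfree_symb_pow V (colon V (edge_symb_pow V E 2) (edge_mon e)) s = prime_pow_Inter V F s"
    unfolding colon_edge_symb_pow_2_edge_mon[OF assms(1) e, folded F_def]
    by (rule sqfree_symb_pow_prime_pow_Inter[OF F_finite F_antichain])
  then show ?thesis
    using colon_edge_symb_pow_edges_prod_Cons[OF assms(1) e L s, folded F_def] by (simp add: es)
qed

end
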